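(* Assume the setting (S) below. If $V$ is a proper $T$-submodule of $M$, then $e^*_0V=0$.
   Context: Setting (S): $\mathbb{F}$ is a field, $d\ge0$, and $(\{\theta_i\}_{i=0}^d;\{\theta^*_i\}_{i=0}^d;\{\zeta_i\}_{i=0}^d)$ are scalars in $\mathbb{F}$ satisfying: (C1) $\theta_i\ne\theta_j$, $\theta^*_i\ne\theta^*_j$ for $i\ne j$; (C2) $\zeta_0=1$, $\zeta_d\ne0$, $\sum_{i=0}^d\eta_{d-i}(\theta_0)\eta^*_{d-i}(\theta^*_0)\zeta_i\ne0$, where $\eta_i(\lambda)=\prod_{j=0}^{i-1}(\lambda-\theta_{d-j})$, $\eta^*_i(\lambda)=\prod_{j=0}^{i-1}(\lambda-\theta^*_{d-j})$; (C3) $\frac{\theta_{i-2}-\theta_{i+1}}{\theta_{i-1}-\theta_i}$ and $\frac{\theta^*_{i-2}-\theta^*_{i+1}}{\theta^*_{i-1}-\theta^*_i}$ are equal and independent of $i$ for $2\le i\le d-1$. Let $\tau_i(\lambda)=\prod_{j=0}^{i-1}(\lambda-\theta_j)$. For any such data satisfying (C1),(C3), $T$ denotes the associative $\mathbb{F}$-algebra with $1$ generated by $a,e_0,\dots,e_d,a^*,e^*_0,\dots,e^*_d$ with relations $e_ie_j=\delta_{ij}e_i$, $e^*_ie^*_j=\delta_{ij}e^*_i$, $\sum_ie_i=\sum_ie^*_i=1$, $a=\sum_i\theta_ie_i$, $a^*=\sum_i\theta^*_ie^*_i$, $e^*_ia^ke^*_j=0$ and $e_i{a^*}^ke_j=0$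 whenever $0\le i,j,k\le d$, $k<|i-j|$; $e^*_0Te^*_0$ is a commutative $\mathbb{F}$-algebra with identity $e^*_0$, and $\mu:\mathbb{F}[x_1,\dots,x_d]\to e^*_0Te^*_0$ is the surjective algebra homomorphism $x_i\mapsto e^*_0\tau_i(a)e^*_0$. It is assumed (the $\mu$-conjecture) that for every $d'\ge0$ and every data $\{\theta_i\},\{\theta^*_i\}$ of length $d'+1$ satisfying (C1),(C3), the corresponding $\mu$ is an isomorphism. For $1\le i\le d$ put $g_i=e^*_0\tau_i(a)e^*_0-\zeta_ie^*_0/((\theta^*_0-\theta^*_1)\cdots(\theta^*_0-\theta^*_i))$, $J=T(1-e^*_0)+\sum_{i=1}^dTg_i$, and $M=T/J$ as a left $T$-module. *)

theory Defs
  imports Main "HOL-Library.Poly_Mapping"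
begin

text \<open>Generators: a, e_i, a^*, e^*_i (indices i are natural numbers; the generators
  with index > d are killed by relations below, so the quotient is exactly T).\<close>
datatype gen = GA | GE nat | GAs | GEs nat

datatype word = W "gen list"

instantiation word :: monoid_add
begin
fun plus_word :: "word \<Rightarrow> word \<Rightarrow> word" where
  "plus_word (W u) (W v) = W (u @ v)"
definition zero_word :: word where "zero_word = W []"
instance
proof
  fix a b c :: word
  show "a + b + c = a + (b + c)" by (cases a; cases b; cases c) simp
  show "0 + a = a" by (cases a) (simp add: zero_word_def)
  show "a + 0 = a" by (cases a) (simp add: zero_word_def)
qed
end

text \<open>The free associative F-algebra F<gens>: finitely supported coefficient functions on
  words, with convolution product (a ring_1 by the Poly_Mapping library).\<close>
type_synonym 'a fa = "word \<Rightarrow>\<^sub>0 'a"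

definition sc :: "'a::field \<Rightarrow> 'a fa" where
  "sc c = Poly_Mapping.single (W []) c"

definition gv :: "gen \<Rightarrow> 'a::field fa" where
  "gv g = Poly_Mapping.single (W [g]) 1"

abbreviation fA :: "'a::field fa" where "fA \<equiv> gv GA"
abbreviation fAs :: "'a::field fa" where "fAs \<equiv> gv GAs"
abbreviation fE :: "nat \<Rightarrow> 'a::field fa" where "fE i \<equiv> gv (GE i)"
abbreviation fEs :: "nat \<Rightarrow> 'a::field fa" where "fEs i \<equiv> gv (GEs i)"

definition T_rels :: "nat \<Rightarrow> (nat \<Rightarrow> 'a::field) \<Rightarrow> (nat \<Rightarrow> 'a) \<Rightarrow> 'a fa set" where
  "T_rels d th ths =
     {fE i * fE j - (if i = j then fE i else 0) | i j. i \<le> d \<and> j \<le> d}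
   \<union> {fEs i * fEs j - (if i = j then fEs i else 0) | i j. i \<le> d \<and> j \<le> d}
   \<union> {(\<Sum>i\<le>d. fE i) - 1, (\<Sum>i\<le>d. fEs i) - 1}
   \<union> {fA - (\<Sum>i\<le>d. sc (th i) * fE i), fAs - (\<Sum>i\<le>d. sc (ths i) * fEs i)}
   \<union> {fEs i * fA ^ k * fEs j | i j k. i \<le> d \<and> j \<le> d \<and> k \<le> d \<and> int k < \<bar>int i - int j\<bar>}
   \<union> {fE i * fAs ^ k * fE j | i j k. i \<le> d \<and> j \<le> d \<and> k \<le> d \<and> int k < \<bar>int i - int j\<bar>}
   \<union> {fE i | i. d < i} \<union> {fEs i | i. d < i}"

inductive_set ideal2 :: "'r::ring set \<Rightarrow> 'r set" for S where
  zero: "0 \<in> ideal2 S"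
| gen: "s \<in> S \<Longrightarrow> x * s * y \<in> ideal2 S"
| add: "u \<in> ideal2 S \<Longrightarrow> v \<in> ideal2 S \<Longrightarrow> u + v \<in> ideal2 S"

text \<open>T = F<gens> / I_T; an element x of the free algebra is 0 in T iff x \<in> I_T.\<close>
definition I_T :: "nat \<Rightarrow> (nat \<Rightarrow> 'a::field) \<Rightarrow> (nat \<Rightarrow> 'a) \<Rightarrow> 'a fa set" where
  "I_T d th ths = ideal2 (T_rels d th ths)"

definition C1 :: "nat \<Rightarrow> (nat \<Rightarrow> 'a::field) \<Rightarrow> (nat \<Rightarrow> 'a) \<Rightarrow> bool" where
  "C1 d th ths \<longleftrightarrow> (\<forall>i\<le>d. \<forall>j\<le>d. i \<noteq> j \<longrightarrow> th i \<noteq> th j \<and> ths i \<noteq> ths j)"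

definition eta :: "nat \<Rightarrow> (nat \<Rightarrow> 'a::field) \<Rightarrow> nat \<Rightarrow> 'a \<Rightarrow> 'a" where
  "eta d th i x = (\<Prod>j<i. x - th (d - j))"

definition C2 :: "nat \<Rightarrow> (nat \<Rightarrow> 'a::field) \<Rightarrow> (nat \<Rightarrow> 'a) \<Rightarrow> (nat \<Rightarrow> 'a) \<Rightarrow> bool" where
  "C2 d th ths ze \<longleftrightarrow> ze 0 = 1 \<and> ze d \<noteq> 0 \<and>
     (\<Sum>i\<le>d. eta d th (d - i) (th 0) * eta d ths (d - i) (ths 0) * ze i) \<noteq> 0"

definition C3 :: "nat \<Rightarrow> (nat \<Rightarrow> 'a::field) \<Rightarrow> (nat \<Rightarrow> 'a) \<Rightarrow> bool" where
  "C3 d th ths \<longleftrightarrow> (\<exists>beta. \<forall>i. 2 \<le> i \<and> i + 1 \<le> d \<longrightarrow>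
      (th (i-2) - th (i+1)) / (th (i-1) - th i) = beta \<and>
      (ths (i-2) - ths (i+1)) / (ths (i-1) - ths i) = beta)"

definition tau_fa :: "(nat \<Rightarrow> 'a::field) \<Rightarrow> nat \<Rightarrow> 'a fa \<Rightarrow> 'a fa" where
  "tau_fa th i x = prod_list (map (\<lambda>j. x - sc (th j)) [0..<i])"

text \<open>Multivariate polynomials in x_1, x_2, ... (finitely supported maps from monomials,
  i.e. finitely supported exponent vectors, to coefficients); those in F[x_1..x_d] are
  the ones whose monomials only involve variables 1..d.\<close>
type_synonym 'a mpoly = "(nat \<Rightarrow>\<^sub>0 nat) \<Rightarrow>\<^sub>0 'a"
definition poly_in_vars :: "nat \<Rightarrow> ('a::field) mpoly \<Rightarrow> bool" where
  "poly_in_vars d p \<longleftrightarrow> (\<forall>m\<in>Poly_Mapping.keys p. \<forall>i\<in>Poly_Mapping.keys (m :: nat \<Rightarrow>\<^sub>0 nat). 1 \<le> i \<and> i \<le> d)"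

text \<open>Representative in the free algebra of mu(p) \<in> e^*_0 T e^*_0, where
  mu(x_i) = e^*_0 tau_i(a) e^*_0 and mu(1) = e^*_0.\<close>
definition mu_fa :: "nat \<Rightarrow> (nat \<Rightarrow> 'a::field) \<Rightarrow> 'a mpoly \<Rightarrow> 'a fa" where
  "mu_fa d th p = (\<Sum>m\<in>Poly_Mapping.keys p. sc (Poly_Mapping.lookup p m) * fEs 0 *
      prod_list (map (\<lambda>i. (fEs 0 * tau_fa th i fA * fEs 0) ^ Poly_Mapping.lookup m i) [1..<d+1]))"

text \<open>mu : F[x_1..x_d] \<rightarrow> e^*_0 T e^*_0 is bijective (it is a homomorphism by construction):
  injective (trivial kernel modulo I_T) and surjective onto e^*_0 T e^*_0.\<close>
definition mu_iso :: "nat \<Rightarrow> (nat \<Rightarrow> 'a::field) \<Rightarrow> (nat \<Rightarrow> 'a) \<Rightarrow> bool" where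
  "mu_iso d th ths \<longleftrightarrow>
     (\<forall>p. poly_in_vars d p \<longrightarrow> mu_fa d th p \<in> I_T d th ths \<longrightarrow> p = 0) \<and>
     (\<forall>x. \<exists>p. poly_in_vars d p \<and> fEs 0 * x * fEs 0 - mu_fa d th p \<in> I_T d th ths)"

definition mu_conjecture :: "'a::field itself \<Rightarrow> bool" where
  "mu_conjecture _ \<longleftrightarrow> (\<forall>d' (th' :: nat \<Rightarrow> 'a) ths'. C1 d' th' ths' \<and> C3 d' th' ths' \<longrightarrow> mu_iso d' th' ths')"

definition g_fa :: "(nat \<Rightarrow> 'a::field) \<Rightarrow> (nat \<Rightarrow> 'a) \<Rightarrow> (nat \<Rightarrow> 'a) \<Rightarrow> nat \<Rightarrow> 'a fa" where
  "g_fa th ths ze i = fEs 0 * tau_fa th i fA * fEs 0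
      - sc (ze i / (\<Prod>j\<in>{1..i}. ths 0 - ths j)) * fEs 0"

text \<open>Preimage in the free algebra of J = T(1 - e^*_0) + \<Sum>_i T g_i.\<close>
definition J_fa :: "nat \<Rightarrow> (nat \<Rightarrow> 'a::field) \<Rightarrow> (nat \<Rightarrow> 'a) \<Rightarrow> (nat \<Rightarrow> 'a) \<Rightarrow> 'a fa set" where
  "J_fa d th ths ze = {x * (1 - fEs 0) + (\<Sum>i\<in>{1..d}. y i * g_fa th ths ze i) + z | x y z.
                        z \<in> I_T d th ths}"

definition Mcls :: "nat \<Rightarrow> (nat \<Rightarrow> 'a::field) \<Rightarrow> (nat \<Rightarrow> 'a) \<Rightarrow> (nat \<Rightarrow> 'a) \<Rightarrow> 'a fa \<Rightarrow> 'a fa set" where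
  "Mcls d th ths ze x = {x + j | j. j \<in> J_fa d th ths ze}"

definition Mset :: "nat \<Rightarrow> (nat \<Rightarrow> 'a::field) \<Rightarrow> (nat \<Rightarrow> 'a) \<Rightarrow> (nat \<Rightarrow> 'a) \<Rightarrow> 'a fa set set" where
  "Mset d th ths ze = range (Mcls d th ths ze)"

text \<open>T-submodules of M. T acts on M through its representatives in the free algebra
  (t + I_T) . (x + J) = t x + J; scalars act as elements c.1 of T.\<close>
definition is_T_submodule :: "nat \<Rightarrow> (nat \<Rightarrow> 'a::field) \<Rightarrow> (nat \<Rightarrow> 'a) \<Rightarrow> (nat \<Rightarrow> 'a) \<Rightarrow> 'a fa set set \<Rightarrow> bool" where
  "is_T_submodule d th ths ze V \<longleftrightarrow>
     V \<subseteq> Mset d th ths ze \<and> Mcls d th ths ze 0 \<in> V \<and>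
     (\<forall>x y. Mcls d th ths ze x \<in> V \<longrightarrow> Mcls d th ths ze y \<in> V \<longrightarrow> Mcls d th ths ze (x + y) \<in> V) \<and>
     (\<forall>t x. Mcls d th ths ze x \<in> V \<longrightarrow> Mcls d th ths ze (t * x) \<in> V)"

end

theory Submission
  imports Defs
begin

text \<open>Modulo \<open>J\<close>, right multiplication by \<open>e\<^sup>*\<^sub>0 \<tau>\<^sub>i(a) e\<^sup>*\<^sub>0\<close> is multiplication by the scalar
  \<open>\<zeta>\<^sub>i / ((\<theta>\<^sup>*\<^sub>0 - \<theta>\<^sup>*\<^sub>1) \<cdots> (\<theta>\<^sup>*\<^sub>0 - \<theta>\<^sup>*\<^sub>i))\<close>, because \<open>g\<^sub>i \<in> J\<close> and \<open>1 - e\<^sup>*\<^sub>0 \<in> J\<close>. Since the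
  \<open>\<mu>\<close>-conjecture makes the elements \<open>e\<^sup>*\<^sub>0 \<tau>\<^sub>i(a) e\<^sup>*\<^sub>0\<close> generate \<open>e\<^sup>*\<^sub>0 T e\<^sup>*\<^sub>0\<close>, every
  \<open>e\<^sup>*\<^sub>0 x\<close> is congruent modulo \<open>J\<close> to a scalar multiple \<open>C e\<^sup>*\<^sub>0\<close>. If \<open>C \<noteq> 0\<close> for some class
  \<open>x + J\<close> in \<open>V\<close>, then \<open>V\<close> contains \<open>e\<^sup>*\<^sub>0 + J = 1 + J\<close>, which generates \<open>M\<close>; so for a proper
  submodule \<open>e\<^sup>*\<^sub>0 x \<in> J\<close>.\<close>

lemma lookup_mult_sc: "Poly_Mapping.lookup ((p::'a::field fa) * sc c) k = Poly_Mapping.lookup p k * c"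
proof -
  have "((c when 0 = q) when k = l + q) = ((c when k = l) when q = 0)" for l q :: word
    by (auto simp: when_def)
  then show ?thesis
    unfolding sc_def zero_word_def[symmetric] lookup_mult lookup_single by (simp add: mult_when)
qed

lemma lookup_sc_mult: "Poly_Mapping.lookup (sc c * (p::'a::field fa)) k = c * Poly_Mapping.lookup p k"
proof -
  have "(c when 0 = l) * (\<Sum>q. Poly_Mapping.lookup p q when k = l + q)
      = (c * Poly_Mapping.lookup p k when l = 0)" for l :: word
    by (auto simp: when_def)
  then show ?thesis
    unfolding sc_def zero_word_def[symmetric] lookup_mult lookup_single by simp
qed

lemma sc_commute: "sc c * (p::'a::field fa) = p * sc c"
  by (rule poly_mapping_eqI) (simp add: lookup_sc_mult lookup_mult_sc mult.commute)

lemma sc_mult: "sc (a * b) = (sc a * sc b :: 'a::field fa)"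
  unfolding sc_def zero_word_def[symmetric] by (simp add: mult_single)

lemma sc_left_commute: "sc a * (sc b * p) = sc b * (sc a * (p::'a::field fa))"
  by (simp only: mult.assoc[symmetric] sc_mult[symmetric] mult.commute[of a b])

lemma sc_one: "sc 1 = (1 :: 'a::field fa)"
  unfolding sc_def zero_word_def[symmetric] by simp

lemma sc_zero: "sc 0 = (0 :: 'a::field fa)"
  unfolding sc_def by simp

lemma sc_add: "sc (a + b) = (sc a + sc b :: 'a::field fa)"
  unfolding sc_def by (simp add: single_add)

lemma sc_sum: "sc (\<Sum>i\<in>A. f i) = (\<Sum>i\<in>A. sc (f i) :: 'a::field fa)"
  by (induct A rule: infinite_finite_induct) (simp_all add: sc_zero sc_add)

lemma ideal2_mult_left: "u \<in> ideal2 S \<Longrightarrow> t * u \<in> ideal2 S"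
proof (induction rule: ideal2.induct)
  case zero
  then show ?case by (simp add: ideal2.zero)
next
  case (gen s x y)
  then show ?case using ideal2.gen[of s S "t * x" y] by (simp add: mult.assoc)
next
  case (add u v)
  then show ?case by (simp add: distrib_left ideal2.add)
qed

context
  fixes d :: nat and th ths ze :: "nat \<Rightarrow> 'a::field"
begin

abbreviation J :: "'a fa set" where
  "J \<equiv> J_fa d th ths ze"

lemma J_faI:
  assumes "z \<in> I_T d th ths"
  shows "x * (1 - fEs 0) + (\<Sum>i\<in>{1..d}. y i * g_fa th ths ze i) + z \<in> J"
  using assms unfolding J_fa_def by blast

lemma J_fa_add:
  assumes "u \<in> J" "v \<in> J"
  shows "u + v \<in> J"
proof -
  from assms obtain x y z x' y' z' where
    u: "u = x * (1 - fEs 0) + (\<Sum>i\<in>{1..d}. y i * g_fa th ths ze i) + z" and z: "z \<in> I_T d th ths" and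
    v: "v = x' * (1 - fEs 0) + (\<Sum>i\<in>{1..d}. y' i * g_fa th ths ze i) + z'" and z': "z' \<in> I_T d th ths"
    unfolding J_fa_def by blast
  have "u + v = (x + x') * (1 - fEs 0) + (\<Sum>i\<in>{1..d}. (y i + y' i) * g_fa th ths ze i) + (z + z')"
    unfolding u v by (simp add: sum.distrib algebra_simps)
  moreover have "z + z' \<in> I_T d th ths"
    using z z' unfolding I_T_def by (rule ideal2.add)
  ultimately show ?thesis
    using J_faI[of "z + z'" "x + x'" "\<lambda>i. y i + y' i"] by simp
qed

lemma J_fa_mult_left:
  assumes "u \<in> J"
  shows "t * u \<in> J"
proof -
  from assms obtain x y z where
    u: "u = x * (1 - fEs 0) + (\<Sum>i\<in>{1..d}. y i * g_fa th ths ze i) + z" and z: "z \<in> I_T d th ths"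
    unfolding J_fa_def by blast
  have "t * u = (t * x) * (1 - fEs 0) + (\<Sum>i\<in>{1..d}. (t * y i) * g_fa th ths ze i) + t * z"
    unfolding u by (simp add: distrib_left sum_distrib_left mult.assoc)
  moreover have "t * z \<in> I_T d th ths"
    using z unfolding I_T_def by (rule ideal2_mult_left)
  ultimately show ?thesis
    using J_faI[of "t * z" "t * x" "\<lambda>i. t * y i"] by simp
qed

lemma I_T_subset_J_fa: "I_T d th ths \<subseteq> J"
  using J_faI[of _ 0 "\<lambda>_. 0"] by auto

lemma zero_in_J_fa: "0 \<in> J"
  using I_T_subset_J_fa ideal2.zero unfolding I_T_def by blast

lemma mult_one_minus_e_in_J_fa: "x * (1 - fEs 0) \<in> J"
  using J_faI[of 0 x "\<lambda>_. 0"] ideal2.zero[of "T_rels d th ths"] unfolding I_T_def by simp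

lemma mult_g_in_J_fa:
  assumes "1 \<le> i" "i \<le> d"
  shows "y * g_fa th ths ze i \<in> J"
proof -
  have "(\<Sum>j\<in>{1..d}. (if j = i then y else 0) * g_fa th ths ze j) = y * g_fa th ths ze i"
    using assms by (simp add: if_distrib[of "\<lambda>z. z * _"] cong: if_cong)
  then show ?thesis
    using J_faI[of 0 0 "\<lambda>j. if j = i then y else 0"] ideal2.zero[of "T_rels d th ths"]
    unfolding I_T_def by simp
qed

lemma J_fa_diff: "u \<in> J \<Longrightarrow> v \<in> J \<Longrightarrow> u - v \<in> J"
  using J_fa_add[of u "- v"] J_fa_mult_left[of v "- 1"] by simp

lemma J_fa_sum: "(\<And>i. i \<in> A \<Longrightarrow> f i \<in> J) \<Longrightarrow> (\<Sum>i\<in>A. f i) \<in> J"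
  by (induct A rule: infinite_finite_induct) (auto simp: zero_in_J_fa J_fa_add)

lemma Mcls_eqI:
  assumes "x - y \<in> J"
  shows "Mcls d th ths ze x = Mcls d th ths ze y"
proof -
  have "x + j \<in> Mcls d th ths ze y" and "y + j \<in> Mcls d th ths ze x" if "j \<in> J" for j
  proof -
    have "x + j = y + ((x - y) + j)" and "y + j = x + ((y - x) + j)" by simp_all
    moreover have "(x - y) + j \<in> J" and "(y - x) + j \<in> J"
      using assms J_fa_diff[OF zero_in_J_fa assms] \<open>j \<in> J\<close> by (simp_all add: J_fa_add)
    ultimately show "x + j \<in> Mcls d th ths ze y" and "y + j \<in> Mcls d th ths ze x"
      unfolding Mcls_def by blast+
  qed
  then show ?thesis
    unfolding Mcls_def by blast
qed

definition right_scalar :: "'a fa \<Rightarrow> 'a \<Rightarrow> bool" where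
  "right_scalar Q c \<longleftrightarrow> (\<forall>y. y * Q - sc c * y \<in> J)"

lemma right_scalar_one: "right_scalar 1 1"
  unfolding right_scalar_def by (simp add: sc_one zero_in_J_fa)

lemma right_scalar_mult:
  assumes "right_scalar Q a" "right_scalar R b"
  shows "right_scalar (Q * R) (a * b)"
  unfolding right_scalar_def
proof
  fix y
  have "sc (a * b) * y = sc b * (sc a * y)"
    by (simp add: sc_mult sc_left_commute mult.assoc)
  then have "y * (Q * R) - sc (a * b) * y = ((y * Q) * R - sc b * (y * Q)) + sc b * (y * Q - sc a * y)"
    by (simp add: algebra_simps)
  moreover have "(y * Q) * R - sc b * (y * Q) \<in> J"
    using assms(2) unfolding right_scalar_def by blast
  moreover have "sc b * (y * Q - sc a * y) \<in> J"
    using assms(1) J_fa_mult_left unfolding right_scalar_def by blast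
  ultimately show "y * (Q * R) - sc (a * b) * y \<in> J"
    by (simp add: J_fa_add)
qed

lemma right_scalar_power: "right_scalar Q a \<Longrightarrow> right_scalar (Q ^ n) (a ^ n)"
  by (induct n) (simp_all add: right_scalar_one right_scalar_mult)

lemma right_scalar_prod_list:
  "(\<And>i. i \<in> set L \<Longrightarrow> right_scalar (F i) (f i)) \<Longrightarrow>
    right_scalar (prod_list (map F L)) (prod_list (map f L))"
  by (induct L) (simp_all add: right_scalar_one right_scalar_mult)

lemma right_scalar_e_tau_e:
  assumes "1 \<le> i" "i \<le> d"
  shows "right_scalar (fEs 0 * tau_fa th i fA * fEs 0) (ze i / (\<Prod>j\<in>{1..i}. ths 0 - ths j))"
  unfolding right_scalar_def
proof
  fix y
  define s where "s = ze i / (\<Prod>j\<in>{1..i}. ths 0 - ths j)"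
  have "y * (sc s * fEs 0) = sc s * y * fEs 0"
    by (metis mult.assoc sc_commute)
  then have "y * (fEs 0 * tau_fa th i fA * fEs 0) - sc s * y
      = y * g_fa th ths ze i - (sc s * y) * (1 - fEs 0)"
    unfolding g_fa_def s_def[symmetric] by (simp add: algebra_simps)
  also have "\<dots> \<in> J"
    using J_fa_diff[OF mult_g_in_J_fa[OF assms] mult_one_minus_e_in_J_fa] .
  finally show "y * (fEs 0 * tau_fa th i fA * fEs 0) - sc s * y \<in> J" .
qed

lemma mu_fa_congruent_scalar: "\<exists>C. mu_fa d th p - sc C * fEs 0 \<in> J"
proof -
  define s where "s i = ze i / (\<Prod>j\<in>{1..i}. ths 0 - ths j)" for i
  define Pm where
    "Pm m = prod_list (map (\<lambda>i. (fEs 0 * tau_fa th i fA * fEs 0) ^ Poly_Mapping.lookup m i) [1..<d+1])"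
    for m
  define cm where "cm m = prod_list (map (\<lambda>i. s i ^ Poly_Mapping.lookup m i) [1..<d+1])" for m
  have "right_scalar (Pm m) (cm m)" for m
    unfolding Pm_def cm_def s_def
    by (intro right_scalar_prod_list right_scalar_power right_scalar_e_tau_e) auto
  then have monomial: "sc (Poly_Mapping.lookup p m) * (fEs 0 * Pm m - sc (cm m) * fEs 0) \<in> J" for m
    unfolding right_scalar_def by (blast intro: J_fa_mult_left)
  have mu_fa_eq: "mu_fa d th p = (\<Sum>m\<in>Poly_Mapping.keys p. sc (Poly_Mapping.lookup p m) * fEs 0 * Pm m)"
    unfolding mu_fa_def Pm_def by simp
  define C where "C = (\<Sum>m\<in>Poly_Mapping.keys p. Poly_Mapping.lookup p m * cm m)"
  have "mu_fa d th p - sc C * fEs 0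
      = (\<Sum>m\<in>Poly_Mapping.keys p. sc (Poly_Mapping.lookup p m) * (fEs 0 * Pm m - sc (cm m) * fEs 0))"
    unfolding mu_fa_eq C_def
    by (simp add: sc_sum sum_distrib_right sum_subtractf[symmetric] sc_mult algebra_simps sc_left_commute)
  also have "\<dots> \<in> J"
    by (rule J_fa_sum) (rule monomial)
  finally show ?thesis ..
qed

lemma e_mult_congruent_scalar:
  assumes "mu_iso d th ths"
  shows "\<exists>C. fEs 0 * x - sc C * fEs 0 \<in> J"
proof -
  obtain p where p: "fEs 0 * x * fEs 0 - mu_fa d th p \<in> I_T d th ths"
    using assms unfolding mu_iso_def by blast
  obtain C where C: "mu_fa d th p - sc C * fEs 0 \<in> J"
    using mu_fa_congruent_scalar by blast
  have "fEs 0 * x - sc C * fEs 0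
      = (fEs 0 * x) * (1 - fEs 0) + (fEs 0 * x * fEs 0 - mu_fa d th p) + (mu_fa d th p - sc C * fEs 0)"
    by (simp add: algebra_simps)
  also have "\<dots> \<in> J"
    using p C I_T_subset_J_fa by (blast intro: J_fa_add mult_one_minus_e_in_J_fa)
  finally show ?thesis ..
qed

lemma submodule_containing_scalar_e_eq_Mset:
  assumes V: "is_T_submodule d th ths ze V" and "C \<noteq> 0"
    and CeV: "Mcls d th ths ze (sc C * fEs 0) \<in> V"
  shows "V = Mset d th ths ze"
proof -
  have mult: "Mcls d th ths ze (t * x) \<in> V" if "Mcls d th ths ze x \<in> V" for t x
    using V that unfolding is_T_submodule_def by blast
  have "sc (1 / C) * (sc C * fEs 0) - 1 = - (1 * (1 - fEs 0))"
    using \<open>C \<noteq> 0\<close> by (simp add: mult.assoc[symmetric] sc_mult[symmetric] sc_one)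
  then have "Mcls d th ths ze (sc (1 / C) * (sc C * fEs 0)) = Mcls d th ths ze 1"
    using J_fa_mult_left[OF mult_one_minus_e_in_J_fa, of "- 1" 1] by (intro Mcls_eqI) simp
  then have "Mcls d th ths ze 1 \<in> V"
    using mult[OF CeV] by metis
  then have "Mcls d th ths ze y \<in> V" for y
    using mult[of 1 y] by simp
  then show ?thesis
    using V unfolding is_T_submodule_def Mset_def by blast
qed

end

theorem lemma9p1:
  fixes d :: nat and th ths ze :: "nat \<Rightarrow> 'a::field" and V :: "'a fa set set"
  assumes C1: "C1 d th ths" and C2: "C2 d th ths ze" and C3: "C3 d th ths"
    and mu: "mu_conjecture TYPE('a)"
    and sub: "is_T_submodule d th ths ze V"
    and proper: "V \<noteq> Mset d th ths ze"
  shows "\<forall>x. Mcls d th ths ze x \<in> V \<longrightarrow> Mcls d th ths ze (fEs 0 * x) = Mcls d th ths ze 0"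
proof (intro allI impI)
  fix x assume xV: "Mcls d th ths ze x \<in> V"
  have "mu_iso d th ths"
    using mu C1 C3 unfolding mu_conjecture_def by blast
  then obtain C where "fEs 0 * x - sc C * fEs 0 \<in> J_fa d th ths ze"
    using e_mult_congruent_scalar by blast
  then have ex_eq: "Mcls d th ths ze (fEs 0 * x) = Mcls d th ths ze (sc C * fEs 0)"
    by (rule Mcls_eqI)
  have "Mcls d th ths ze (fEs 0 * x) \<in> V"
    using sub xV unfolding is_T_submodule_def by blast
  then have "C = 0"
    using submodule_containing_scalar_e_eq_Mset[OF sub _ , of C] proper ex_eq by auto
  then show "Mcls d th ths ze (fEs 0 * x) = Mcls d th ths ze 0"
    using ex_eq by (simp add: sc_zero)
qed

end
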